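(* Let $(\Omega,\mathcal F,\mathbb P)$ be a probability space carrying a group of measurable bijections $\{\theta_n\}_{n\in\mathbb Z}$ each preserving $\mathbb P$, and let $\{a_n\}_{n\in\mathbb Z}$ be i.i.d. random variables with values in $\{1,2,\dots\}$, compatible with the flow, with $\mathbb E[a_0]<\infty$ and $\mathbb P[a_0=1]>0$. Let $N_n=\#\{m\in\mathbb Z: m<n,\ m+a_m>n\}+1$ and $\Psi^o=\{m\in\mathbb Z:N_m=1\}$. Then under the Palm probability $\mathbb P_{\Psi^o}[\cdot]=\mathbb P[\cdot\mid 0\in\Psi^o]=\mathbb P[\cdot\mid N_0=1]$, the sequence $\{a_n\}_{n<0}$ is independent of $\{a_n\}_{n\ge 0}$.
   Context: A flow-compatible sequence means $a_n(\omega)=a_0(\theta_n\omega)$ for all $n$. The event $\{0\in\Psi^o\}$ has positive probability under these assumptions, so the conditional probability is well defined. *)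

theory Defs
  imports "HOL-Probability.Probability" "HOL-Library.Extended_Nat"
begin

definition covering_set :: "(int \<Rightarrow> 'w \<Rightarrow> nat) \<Rightarrow> int \<Rightarrow> 'w \<Rightarrow> int set" where
  "covering_set a n \<omega> = {m. m < n \<and> m + int (a m \<omega>) > n}"

definition Ncount :: "(int \<Rightarrow> 'w \<Rightarrow> nat) \<Rightarrow> int \<Rightarrow> 'w \<Rightarrow> enat" where
  "Ncount a n \<omega> =
     (if finite (covering_set a n \<omega>) then enat (card (covering_set a n \<omega>)) else \<infinity>) + 1"

definition Psi_o :: "(int \<Rightarrow> 'w \<Rightarrow> nat) \<Rightarrow> 'w \<Rightarrow> int set" where
  "Psi_o a \<omega> = {m. Ncount a m \<omega> = 1}"

definition palm :: "'w measure \<Rightarrow> (int \<Rightarrow> 'w \<Rightarrow> nat) \<Rightarrow> 'w measure" where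
  "palm M a = uniform_measure M {\<omega> \<in> space M. 0 \<in> Psi_o a \<omega>}"

end

theory Submission imports Defs begin

text \<open>No interval \<open>[m, m + a m)\<close> with \<open>m < 0\<close> covers \<open>0\<close> exactly when \<open>a m \<le> -m\<close>
  for all \<open>m < 0\<close>, so \<open>{0 \<in> \<Psi>\<^sup>o}\<close> is an event of the past \<open>(a m)\<^sub>m\<^sub><\<^sub>0\<close> alone.
  Conditioning on a positive-probability event measurable with respect to one of two independent
  random variables keeps them independent.
  Positivity: with \<open>F\<close> the distribution function of \<open>a 0\<close> and \<open>c = P[a 0 = 1] > 0\<close>,
  independence gives \<open>P[a m \<le> -m for -k \<le> m < 0] = F 1 \<cdot> \<dots> \<cdot> F k\<close>; each factor is at least
  \<open>exp (-(1 - F j) / c)\<close>, and \<open>\<Sum>j\<ge>1. 1 - F j \<le> E[a 0] < \<infinity>\<close> keeps the products away from \<open>0\<close>.\<close>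

lemma (in prob_space) indep_var_uniform_measure:
  assumes indep: "indep_var N1 X N2 Y"
    and T: "T \<in> sets N1"
    and pos: "prob (X -` T \<inter> space M) > 0"
  shows "prob_space.indep_var (uniform_measure M (X -` T \<inter> space M)) N1 X N2 Y"
proof -
  define E where "E = X -` T \<inter> space M"
  define AX where "AX = sigma_sets (space M) {X -` A \<inter> space M |A. A \<in> sets N1}"
  define AY where "AY = sigma_sets (space M) {Y -` A \<inter> space M |A. A \<in> sets N2}"
  have rv: "random_variable N1 X" "random_variable N2 Y" and "indep_set AX AY"
    using indep unfolding indep_var_eq AX_def AY_def by blast+
  then have AX_events: "AX \<subseteq> events" and AY_events: "AY \<subseteq> events"
    and mult: "\<And>x y. x \<in> AX \<Longrightarrow> y \<in> AY \<Longrightarrow> prob (x \<inter> y) = prob x * prob y"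
    unfolding indep_sets2_eq by blast+
  interpret AX: sigma_algebra "space M" AX
    unfolding AX_def by (rule sigma_algebra_sigma_sets) auto
  have E_AX: "E \<in> AX"
    unfolding AX_def E_def using T by (auto intro: sigma_sets.Basic)
  have E_pos: "prob E > 0"
    using pos by (simp add: E_def)
  then have E_finite: "emeasure M E \<noteq> 0" "emeasure M E \<noteq> \<infinity>"
    by (auto simp: emeasure_eq_measure)
  interpret C: prob_space "uniform_measure M E"
    by (rule prob_space_uniform_measure[OF E_finite])
  have C_measure: "measure (uniform_measure M E) S = prob (E \<inter> S) / prob E" if "S \<in> events" for S
    using E_finite that by simp
  have "C.indep_set AX AY"
    unfolding C.indep_sets2_eq sets_uniform_measure
  proof (intro conjI AX_events AY_events ballI)
    fix x y assume x: "x \<in> AX" and y: "y \<in> AY"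
    have "prob (E \<inter> (x \<inter> y)) = prob (E \<inter> x) * prob y"
      using mult[OF AX.Int[OF E_AX x] y] by (simp add: Int_assoc)
    moreover have "prob (E \<inter> y) = prob E * prob y"
      using mult[OF E_AX y] .
    moreover have "x \<in> events" "y \<in> events"
      using x y AX_events AY_events by auto
    ultimately show "measure (uniform_measure M E) (x \<inter> y)
        = measure (uniform_measure M E) x * measure (uniform_measure M E) y"
      using E_pos by (simp add: C_measure sets.Int)
  qed
  then show ?thesis
    using rv unfolding C.indep_var_eq E_def[symmetric] AX_def AY_def
    by (simp add: measurable_cong_sets[OF sets_uniform_measure refl])
qed

lemma sum_of_bool_less_le: "(\<Sum>j\<in>{1..n}. of_bool (j < x) :: real) \<le> real x"
proof -
  have "(\<Sum>j\<in>{1..n}. of_bool (j < x) :: real) = real (min n (x - 1))"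
    by (induction n) (auto simp: min_def)
  then show ?thesis by simp
qed

lemma (in prob_space) tail_sum_le_expectation:
  fixes X :: "'a \<Rightarrow> nat"
  assumes [measurable]: "X \<in> M \<rightarrow>\<^sub>M count_space UNIV"
    and X_int: "integrable M (\<lambda>\<omega>. real (X \<omega>))"
  shows "(\<Sum>j\<in>{1..n}. prob {\<omega> \<in> space M. j < X \<omega>}) \<le> expectation (\<lambda>\<omega>. real (X \<omega>))"
proof -
  have tail_int: "integrable M (indicator {\<omega> \<in> space M. j < X \<omega>} :: 'a \<Rightarrow> real)" for j
    by (intro integrable_real_indicator) (auto simp: less_top[symmetric])
  have "(\<Sum>j\<in>{1..n}. prob {\<omega> \<in> space M. j < X \<omega>})
      = expectation (\<lambda>\<omega>. \<Sum>j\<in>{1..n}. indicator {\<omega> \<in> space M. j < X \<omega>} \<omega>)"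
    using tail_int by (subst Bochner_Integration.integral_sum) auto
  also have "\<dots> \<le> expectation (\<lambda>\<omega>. real (X \<omega>))"
  proof (rule integral_mono)
    fix \<omega> assume "\<omega> \<in> space M"
    then have "(\<Sum>j\<in>{1..n}. indicator {\<omega> \<in> space M. j < X \<omega>} \<omega> :: real)
        = (\<Sum>j\<in>{1..n}. of_bool (j < X \<omega>))"
      by (intro sum.cong) (auto simp: indicator_def)
    then show "(\<Sum>j\<in>{1..n}. indicator {\<omega> \<in> space M. j < X \<omega>} \<omega> :: real) \<le> real (X \<omega>)"
      using sum_of_bool_less_le by simp
  qed (use tail_int X_int in auto)
  finally show ?thesis .
qed

lemma exp_neg_div_le:
  fixes F c :: real
  assumes "0 < c" "c \<le> F" "F \<le> 1"
  shows "exp (- (1 - F) / c) \<le> F"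
proof -
  have F_pos: "F > 0" using assms by simp
  have "(1 - F) / F \<le> (1 - F) / c"
    using assms by (intro divide_left_mono) auto
  then have "- (1 - F) / c \<le> - (1 - F) / F"
    by (simp only: minus_divide_left[symmetric] neg_le_iff_le)
  also have "\<dots> \<le> ln F"
    using ln_le_minus_one[of "1 / F"] F_pos by (simp add: ln_div field_simps)
  finally show ?thesis
    using F_pos by (metis exp_le_cancel_iff exp_ln)
qed

lemma exp_neg_sum_le_prod:
  fixes F :: "'a \<Rightarrow> real"
  assumes "0 < c" "\<And>j. j \<in> J \<Longrightarrow> c \<le> F j \<and> F j \<le> 1"
  shows "exp (- (\<Sum>j\<in>J. 1 - F j) / c) \<le> (\<Prod>j\<in>J. F j)"
proof (cases "finite J")
  case True
  have "exp (- (\<Sum>j\<in>J. 1 - F j) / c) = (\<Prod>j\<in>J. exp (- (1 - F j) / c))"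
    using True by (simp add: exp_sum[symmetric] sum_divide_distrib flip: minus_divide_left sum_negf)
  also have "\<dots> \<le> (\<Prod>j\<in>J. F j)"
    using assms by (intro prod_mono conjI exp_neg_div_le) auto
  finally show ?thesis .
qed simp

lemma (in prob_space) prob_eq_if_distr_eq:
  assumes "distr M N X = distr M N Y" "X \<in> M \<rightarrow>\<^sub>M N" "Y \<in> M \<rightarrow>\<^sub>M N" "A \<in> sets N"
  shows "prob (X -` A \<inter> space M) = prob (Y -` A \<inter> space M)"
  using assms by (metis measure_distr)

lemma (in prob_space) prob_INT_decseq_ge:
  assumes "range E \<subseteq> events" "decseq E" "\<And>k. b \<le> prob (E k)"
  shows "b \<le> prob (\<Inter>k. E k)"
proof -
  have "(\<lambda>k. prob (E k)) \<longlonglongrightarrow> prob (\<Inter>k. E k)"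
    using assms by (intro finite_Lim_measure_decseq)
  then show ?thesis
    by (rule LIMSEQ_le_const) (use assms in auto)
qed

lemma (in prob_space) prob_lengths_bounded_upto_ge:
  fixes a :: "int \<Rightarrow> 'a \<Rightarrow> nat"
  assumes indep: "indep_vars (\<lambda>_. count_space UNIV) a UNIV"
    and ident: "\<And>n. distr M (count_space UNIV) (a n) = distr M (count_space UNIV) (a 0)"
    and a_int: "integrable M (\<lambda>\<omega>. real (a 0 \<omega>))"
    and a_one: "prob {\<omega> \<in> space M. a 0 \<omega> = 1} > 0"
  shows "exp (- expectation (\<lambda>\<omega>. real (a 0 \<omega>)) / prob {\<omega> \<in> space M. a 0 \<omega> = 1})
    \<le> prob (\<Inter>m\<in>{-int k - 1..-1}. {\<omega> \<in> space M. a m \<omega> \<le> nat (-m)})"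
proof -
  have a_meas[measurable]: "a n \<in> M \<rightarrow>\<^sub>M count_space UNIV" for n
    using indep unfolding indep_vars_def2 by blast
  define F where "F j = prob {\<omega> \<in> space M. a 0 \<omega> \<le> j}" for j
  define c where "c = prob {\<omega> \<in> space M. a 0 \<omega> = 1}"
  have F_ident: "prob {\<omega> \<in> space M. a n \<omega> \<le> j} = F j" for n j
    using prob_eq_if_distr_eq[OF ident a_meas a_meas, of "{..j}" n]
    unfolding F_def by (simp add: vimage_def Int_def conj_commute)
  have F_bounds: "c \<le> F j \<and> F j \<le> 1" if "j \<ge> 1" for j
    unfolding c_def F_def using that by (auto intro: finite_measure_mono)
  have tail_prob: "1 - F j = prob {\<omega> \<in> space M. j < a 0 \<omega>}" for j
    unfolding F_def by (subst prob_compl[symmetric]) (auto intro: arg_cong[where f = prob])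
  have "(\<Sum>j\<in>{1..Suc k}. 1 - F j) \<le> expectation (\<lambda>\<omega>. real (a 0 \<omega>))"
    unfolding tail_prob by (rule tail_sum_le_expectation[OF a_meas a_int])
  then have exponent_le: "- expectation (\<lambda>\<omega>. real (a 0 \<omega>)) / c \<le> - (\<Sum>j\<in>{1..Suc k}. 1 - F j) / c"
    using a_one unfolding c_def by (intro divide_right_mono) auto
  have "prob (\<Inter>m\<in>{-int k - 1..-1}. {\<omega> \<in> space M. a m \<omega> \<le> nat (-m)})
      = (\<Prod>m\<in>{-int k - 1..-1}. F (nat (-m)))"
    using indep_eventsI_indep_vars[OF indep, of "\<lambda>m x. x \<le> nat (-m)"]
    unfolding indep_events_def by (simp add: F_ident)
  also have "\<dots> = (\<Prod>j\<in>{1..Suc k}. F j)"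
    by (rule prod.reindex_bij_witness[where i="\<lambda>j. - int j" and j="\<lambda>m. nat (-m)"]) auto
  also have "\<dots> \<ge> exp (- (\<Sum>j\<in>{1..Suc k}. 1 - F j) / c)"
    using a_one F_bounds unfolding c_def by (intro exp_neg_sum_le_prod) auto
  also have "exp (- (\<Sum>j\<in>{1..Suc k}. 1 - F j) / c)
      \<ge> exp (- expectation (\<lambda>\<omega>. real (a 0 \<omega>)) / c)"
    using exponent_le by simp
  finally show ?thesis
    unfolding c_def .
qed

lemma (in prob_space) prob_all_lengths_bounded_pos:
  fixes a :: "int \<Rightarrow> 'a \<Rightarrow> nat"
  assumes "indep_vars (\<lambda>_. count_space UNIV) a UNIV"
    and "\<And>n. distr M (count_space UNIV) (a n) = distr M (count_space UNIV) (a 0)"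
    and "integrable M (\<lambda>\<omega>. real (a 0 \<omega>))"
    and "prob {\<omega> \<in> space M. a 0 \<omega> = 1} > 0"
  shows "prob {\<omega> \<in> space M. \<forall>m<0. a m \<omega> \<le> nat (-m)} > 0"
proof -
  define E where "E k = (\<Inter>m\<in>{-int k - 1..-1}. {\<omega> \<in> space M. a m \<omega> \<le> nat (-m)})" for k
  have [measurable]: "a n \<in> M \<rightarrow>\<^sub>M count_space UNIV" for n
    using assms(1) unfolding indep_vars_def2 by blast
  have "(\<Inter>k. E k) = {\<omega> \<in> space M. \<forall>m<0. a m \<omega> \<le> nat (-m)}"
  proof safe
    fix \<omega> assume \<omega>: "\<omega> \<in> (\<Inter>k. E k)"
    then have "\<omega> \<in> E 0"
      by blast
    then show "\<omega> \<in> space M"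
      by (auto simp: E_def)
    fix m :: int assume "m < 0"
    from \<omega> have "\<omega> \<in> E (nat (-m))"
      by blast
    with \<open>m < 0\<close> show "a m \<omega> \<le> nat (-m)"
      by (auto simp: E_def)
  qed (auto simp: E_def)
  moreover have "exp (- expectation (\<lambda>\<omega>. real (a 0 \<omega>)) / prob {\<omega> \<in> space M. a 0 \<omega> = 1})
      \<le> prob (\<Inter>k. E k)"
  proof (rule prob_INT_decseq_ge)
    show "decseq E"
      unfolding decseq_def E_def by (intro allI impI INT_anti_mono) auto
  qed (use prob_lengths_bounded_upto_ge[OF assms] in \<open>auto simp: E_def\<close>)
  ultimately show ?thesis
    by (smt (verit) exp_gt_zero)
qed

lemma mem_Psi_o_iff: "n \<in> Psi_o a \<omega> \<longleftrightarrow> covering_set a n \<omega> = {}"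
proof -
  have "Ncount a n \<omega> = 1 \<longleftrightarrow> finite (covering_set a n \<omega>) \<and> card (covering_set a n \<omega>) = 0"
    unfolding Ncount_def by (simp add: one_enat_def enat_0_iff)
  then show ?thesis
    unfolding Psi_o_def by auto
qed

lemma covering_set_zero_eq_empty_iff:
  "covering_set a 0 \<omega> = {} \<longleftrightarrow> (\<forall>m<0. a m \<omega> \<le> nat (-m))"
  unfolding covering_set_def by (auto; force)

theorem mainTheorem2:
  fixes M :: "'w measure"
    and \<theta> :: "int \<Rightarrow> 'w \<Rightarrow> 'w"
    and a :: "int \<Rightarrow> 'w \<Rightarrow> nat"
  assumes P: "prob_space M"
    and theta_meas: "\<And>n. \<theta> n \<in> M \<rightarrow>\<^sub>M M"
    and theta_bij: "\<And>n. bij_betw (\<theta> n) (space M) (space M)"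
    and theta_pres: "\<And>n. distr M M (\<theta> n) = M"
    and theta_zero: "\<And>\<omega>. \<omega> \<in> space M \<Longrightarrow> \<theta> 0 \<omega> = \<omega>"
    and theta_add: "\<And>n m \<omega>. \<omega> \<in> space M \<Longrightarrow> \<theta> (n + m) \<omega> = \<theta> n (\<theta> m \<omega>)"
    and a_indep: "prob_space.indep_vars M (\<lambda>_. count_space UNIV) a UNIV"
    and a_ident: "\<And>n. distr M (count_space UNIV) (a n) = distr M (count_space UNIV) (a 0)"
    and a_pos: "\<And>n \<omega>. \<omega> \<in> space M \<Longrightarrow> a n \<omega> \<ge> 1"
    and a_flow: "\<And>n \<omega>. \<omega> \<in> space M \<Longrightarrow> a n \<omega> = a 0 (\<theta> n \<omega>)"
    and a_int: "integrable M (\<lambda>\<omega>. real (a 0 \<omega>))"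
    and a_one: "measure M {\<omega> \<in> space M. a 0 \<omega> = 1} > 0"
  shows "prob_space.indep_var (palm M a)
           (PiM {..<0} (\<lambda>_. count_space UNIV)) (\<lambda>\<omega>. \<lambda>n\<in>{..<0}. a n \<omega>)
           (PiM {0..} (\<lambda>_. count_space UNIV)) (\<lambda>\<omega>. \<lambda>n\<in>{0..}. a n \<omega>)"
proof -
  interpret prob_space M by (rule P)
  define T where "T = {f \<in> space (PiM {..<0::int} (\<lambda>_. count_space UNIV)). \<forall>m<0. f m \<le> nat (-m)}"
  define past where "past = (\<lambda>\<omega>. \<lambda>n\<in>{..<0::int}. a n \<omega>)"
  have T_sets: "T \<in> sets (PiM {..<0} (\<lambda>_. count_space UNIV))"
    unfolding T_def by measurable
  have event_eq: "past -` T \<inter> space M = {\<omega> \<in> space M. \<forall>m<0. a m \<omega> \<le> nat (-m)}"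
    unfolding T_def past_def by (auto simp: space_PiM)
  have palm_eq: "palm M a = uniform_measure M (past -` T \<inter> space M)"
    unfolding palm_def event_eq mem_Psi_o_iff covering_set_zero_eq_empty_iff ..
  have event_pos: "prob (past -` T \<inter> space M) > 0"
    unfolding event_eq
    using a_indep a_ident a_int a_one by (rule prob_all_lengths_bounded_pos)
  have "indep_var (PiM {..<0} (\<lambda>_. count_space UNIV)) past
      (PiM {0..} (\<lambda>_. count_space UNIV)) (\<lambda>\<omega>. \<lambda>n\<in>{0..}. a n \<omega>)"
    unfolding past_def by (rule indep_var_restrict[OF a_indep]) auto
  from indep_var_uniform_measure[OF this T_sets event_pos]
  show ?thesis
    unfolding palm_eq past_def .
qed

end
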